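(* For every natural number $n\geq 2$, the $n$-Split Interval $S_n(I)$ is a compact Hausdorff space.
   Context: Let $I=[0,1]$. For $n\geq 2$, $S_n(I)$ is the set $I\times\{0,\ldots,n-1\}$ with the topology in which the points $(x,i)$ with $i\in\{2,\ldots,n-1\}$ are isolated, a point $(x,0)$ with $x>0$ has basic neighbourhoods $\{(x,0)\}\cup\{(y,i): z_0<y<x,\ i\in\{0,\ldots,n-1\}\}$ for $z_0\in I$, $z_0<x$, a point $(x,1)$ with $x<1$ has basic neighbourhoods $\{(x,1)\}\cup\{(y,i): x<y<z_1,\ i\in\{0,\ldots,n-1\}\}$ for $z_1\in I$, $z_1>x$, and the points $(0,0)$ and $(1,1)$ are isolated. *)

theory Defs
  imports "HOL-Analysis.Analysis"
begin

definition split_interval_carrier :: "nat \<Rightarrow> (real \<times> nat) set" where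
  "split_interval_carrier n = {0..1} \<times> {0..<n}"

definition split_interval_basis :: "nat \<Rightarrow> (real \<times> nat) set set" where
  "split_interval_basis n =
     {{(x, i)} | x i. x \<in> {0..1} \<and> 2 \<le> i \<and> i < n}
   \<union> {{(x, 0)} \<union> {(y, i) | y i. z0 < y \<and> y < x \<and> i < n} | x z0.
        x \<in> {0..1} \<and> 0 < x \<and> z0 \<in> {0..1} \<and> z0 < x}
   \<union> {{(x, 1)} \<union> {(y, i) | y i. x < y \<and> y < z1 \<and> i < n} | x z1.
        x \<in> {0..1} \<and> x < 1 \<and> z1 \<in> {0..1} \<and> x < z1}
   \<union> {{(0, 0)}, {(1, 1)}}"

definition split_interval :: "nat \<Rightarrow> (real \<times> nat) topology" where
  "split_interval n = topology_generated_by (split_interval_basis n)"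

end

theory Submission
  imports Defs
begin

text \<open>
  Every point p has basic neighbourhoods N_e(p) of every radius e > 0, shrinking with e:
  a left half-interval for (x,0), a right half-interval for (x,1), and {p} otherwise.
  Two distinct points are separated by neighbourhoods of radius half the distance of
  their first coordinates; if the first coordinates agree, any radius works, since
  left and right neighbourhoods lie on opposite sides of x.
  For compactness, choose for each x \<in> I a radius d(x) such that N_d(x)(x,0) and
  N_d(x)(x,1) lie in members of the cover, and cover I by finitely many balls
  B(x, d(x)). A point (y,j) with 0 < y < 1 and y distinct from the centre x of its ball
  then lies in the left or right neighbourhood of x; the finitely many remaining
  points (first coordinate 0, 1 or a centre) are covered one by one.
\<close>

definition split_nbhd :: "nat \<Rightarrow> real \<times> nat \<Rightarrow> real \<Rightarrow> (real \<times> nat) set" where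
  "split_nbhd n p e =
    (if snd p = 0 \<and> fst p > 0
     then insert p {(y, i). max 0 (fst p - e) < y \<and> y < fst p \<and> i < n}
     else if snd p = 1 \<and> fst p < 1
     then insert p {(y, i). fst p < y \<and> y < min 1 (fst p + e) \<and> i < n}
     else {p})"

lemma split_nbhd_self: "p \<in> split_nbhd n p e"
  unfolding split_nbhd_def by auto

lemma split_nbhd_min_subset:
  "split_nbhd n p (min e e') \<subseteq> split_nbhd n p e \<inter> split_nbhd n p e'"
  unfolding split_nbhd_def by auto

lemma split_interval_basis_leftI:
  assumes "0 \<le> z0" "z0 < x" "x \<le> 1"
  shows "{(x, 0)} \<union> {(y, i) | y i. z0 < y \<and> y < x \<and> i < n} \<in> split_interval_basis n"
  unfolding split_interval_basis_def
  by (rule UnI1, rule UnI1, rule UnI2, rule CollectI, rule exI[of _ x], rule exI[of _ z0])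
     (use assms in auto)

lemma split_interval_basis_rightI:
  assumes "0 \<le> x" "x < z1" "z1 \<le> 1"
  shows "{(x, 1)} \<union> {(y, i) | y i. x < y \<and> y < z1 \<and> i < n} \<in> split_interval_basis n"
  unfolding split_interval_basis_def
  by (rule UnI1, rule UnI2, rule CollectI, rule exI[of _ x], rule exI[of _ z1])
     (use assms in auto)

lemma split_nbhd_in_basis:
  assumes "p \<in> split_interval_carrier n" "e > 0"
  shows "split_nbhd n p e \<in> split_interval_basis n"
proof -
  obtain x i where p: "p = (x, i)" "0 \<le> x" "x \<le> 1" "i < n"
    using assms(1) by (auto simp: split_interval_carrier_def)
  consider (left) "i = 0" "x > 0" | (right) "i = 1" "x < 1"
    | (isolated) "2 \<le> i \<or> p = (0, 0) \<or> p = (1, 1)"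
    using p by fastforce
  then show ?thesis
  proof cases
    case left
    then have "split_nbhd n p e = {(x, 0)} \<union> {(y, i) | y i. max 0 (x - e) < y \<and> y < x \<and> i < n}"
      using p by (auto simp: split_nbhd_def)
    also have "\<dots> \<in> split_interval_basis n"
      using left p assms(2) by (intro split_interval_basis_leftI) auto
    finally show ?thesis .
  next
    case right
    then have "split_nbhd n p e = {(x, 1)} \<union> {(y, i) | y i. x < y \<and> y < min 1 (x + e) \<and> i < n}"
      using p by (auto simp: split_nbhd_def)
    also have "\<dots> \<in> split_interval_basis n"
      using right p assms(2) by (intro split_interval_basis_rightI) auto
    finally show ?thesis .
  next
    case isolated
    then have "split_nbhd n p e = {p}"
      using p by (auto simp: split_nbhd_def)
    also have "\<dots> \<in> split_interval_basis n"
      using isolated p unfolding split_interval_basis_def by auto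
    finally show ?thesis .
  qed
qed

lemma split_interval_basisE:
  assumes "B \<in> split_interval_basis n"
  obtains (point) x i where "B = {(x, i)}" "2 \<le> i \<or> (x, i) = (0, 0) \<or> (x, i) = (1, 1)"
  | (left) x z0 where "B = {(x, 0)} \<union> {(y, i) | y i. z0 < y \<and> y < x \<and> i < n}"
      "0 \<le> z0" "z0 < x" "x \<le> 1"
  | (right) x z1 where "B = {(x, 1)} \<union> {(y, i) | y i. x < y \<and> y < z1 \<and> i < n}"
      "0 \<le> x" "x < z1" "z1 \<le> 1"
  using assms unfolding split_interval_basis_def by auto

lemma split_interval_basis_contains_nbhd:
  assumes "B \<in> split_interval_basis n" "p \<in> B"
  shows "\<exists>e>0. split_nbhd n p e \<subseteq> B"
  using assms(1)
proof (cases rule: split_interval_basisE)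
  case (point x i)
  then have "split_nbhd n p 1 = B"
    using assms(2) by (auto simp: split_nbhd_def)
  then show ?thesis
    using zero_less_one by blast
next
  case (left x z0)
  show ?thesis
  proof (cases "p = (x, 0)")
    case True
    have "split_nbhd n p (x - z0) \<subseteq> B"
      using left True by (auto simp: split_nbhd_def)
    with left show ?thesis
      by (intro exI[of _ "x - z0"]) auto
  next
    case False
    then obtain y j where p: "p = (y, j)" "z0 < y" "y < x" "j < n"
      using left assms(2) by auto
    have "split_nbhd n p (min (y - z0) (x - y)) \<subseteq> B"
      using left p by (auto simp: split_nbhd_def)
    with p show ?thesis
      by (intro exI[of _ "min (y - z0) (x - y)"]) auto
  qed
next
  case (right x z1)
  show ?thesis
  proof (cases "p = (x, 1)")
    case True
    have "split_nbhd n p (z1 - x) \<subseteq> B"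
      using right True by (auto simp: split_nbhd_def)
    with right show ?thesis
      by (intro exI[of _ "z1 - x"]) auto
  next
    case False
    then obtain y j where p: "p = (y, j)" "x < y" "y < z1" "j < n"
      using right assms(2) by auto
    have "split_nbhd n p (min (y - x) (z1 - y)) \<subseteq> B"
      using right p by (auto simp: split_nbhd_def)
    with p show ?thesis
      by (intro exI[of _ "min (y - x) (z1 - y)"]) auto
  qed
qed

lemma generate_topology_on_split_contains_nbhd:
  assumes "generate_topology_on (split_interval_basis n) U" "p \<in> U"
  shows "\<exists>e>0. split_nbhd n p e \<subseteq> U"
  using assms
proof (induction arbitrary: p rule: generate_topology_on.induct)
  case Empty
  then show ?case by simp
next
  case (Int U V)
  then obtain e e' where "e > 0" "split_nbhd n p e \<subseteq> U" "e' > 0" "split_nbhd n p e' \<subseteq> V"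
    by blast
  then show ?case
    using split_nbhd_min_subset[of n p e e'] by (intro exI[of _ "min e e'"]) auto
next
  case (UN K)
  then show ?case by blast
next
  case (Basis B)
  then show ?case by (rule split_interval_basis_contains_nbhd)
qed

lemma openin_split_nbhd:
  assumes "p \<in> split_interval_carrier n" "e > 0"
  shows "openin (split_interval n) (split_nbhd n p e)"
  unfolding split_interval_def
  by (rule topology_generated_by_Basis, rule split_nbhd_in_basis[OF assms])

lemma openin_split_interval_contains_nbhd:
  assumes "openin (split_interval n) U" "p \<in> U"
  shows "\<exists>e>0. split_nbhd n p e \<subseteq> U"
  using assms generate_topology_on_split_contains_nbhd openin_topology_generated_by
  unfolding split_interval_def by blast

lemma topspace_split_interval:
  assumes "n \<ge> 2"
  shows "topspace (split_interval n) = split_interval_carrier n"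
proof
  show "topspace (split_interval n) \<subseteq> split_interval_carrier n"
    using assms unfolding split_interval_def topology_generated_by_topspace
      split_interval_basis_def split_interval_carrier_def by auto
  show "split_interval_carrier n \<subseteq> topspace (split_interval n)"
    unfolding split_interval_def topology_generated_by_topspace
    using split_nbhd_self split_nbhd_in_basis[OF _ zero_less_one] by blast
qed

lemma split_nbhd_memD:
  assumes "r \<in> split_nbhd n p e" "r \<noteq> p"
  shows "\<bar>fst r - fst p\<bar> < e"
    and "snd p = 0 \<and> fst r < fst p \<or> snd p = 1 \<and> fst p < fst r"
  using assms unfolding split_nbhd_def by (auto split: if_splits)

lemma split_nbhd_disjoint:
  assumes "p \<noteq> q"
  shows "\<exists>e>0. disjnt (split_nbhd n p e) (split_nbhd n q e)"
proof -
  define e where "e = (if fst p = fst q then 1 else \<bar>fst p - fst q\<bar> / 2)"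
  have "r \<notin> split_nbhd n q e" if r: "r \<in> split_nbhd n p e" for r
  proof
    assume r': "r \<in> split_nbhd n q e"
    show False
    proof (cases "fst p = fst q")
      case True
      then have "snd p \<noteq> snd q"
        using assms prod_eqI by blast
      then show False
        using split_nbhd_memD(2)[OF r] split_nbhd_memD(2)[OF r'] True assms by fastforce
    next
      case False
      have "\<bar>fst p - fst q\<bar> \<le> \<bar>fst r - fst p\<bar> + \<bar>fst r - fst q\<bar>"
        by arith
      moreover have "\<bar>fst r - fst p\<bar> + \<bar>fst r - fst q\<bar> < 2 * e"
        using split_nbhd_memD(1)[OF r] split_nbhd_memD(1)[OF r'] assms
        by (cases "r = p"; cases "r = q") (auto simp: e_def)
      ultimately show False
        using False by (simp add: e_def)
    qed
  qed
  moreover have "e > 0"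
    unfolding e_def by auto
  ultimately show ?thesis
    unfolding disjnt_def by blast
qed

lemma Hausdorff_space_split_interval:
  assumes "n \<ge> 2"
  shows "Hausdorff_space (split_interval n)"
  unfolding Hausdorff_space_def topspace_split_interval[OF assms]
proof (intro allI impI)
  fix p q assume pq: "p \<in> split_interval_carrier n \<and> q \<in> split_interval_carrier n \<and> p \<noteq> q"
  then obtain e where "e > 0" "disjnt (split_nbhd n p e) (split_nbhd n q e)"
    using split_nbhd_disjoint by blast
  with pq show "\<exists>U V. openin (split_interval n) U \<and> openin (split_interval n) V
      \<and> p \<in> U \<and> q \<in> V \<and> disjnt U V"
    by (meson openin_split_nbhd split_nbhd_self)
qed

lemma split_nbhd_interior_point:
  assumes "0 < y" "y < 1" "j < n" "\<bar>y - x\<bar> < d" "y \<noteq> x"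
  shows "(y, j) \<in> split_nbhd n (x, 0) d \<union> split_nbhd n (x, 1) d"
  using assms unfolding split_nbhd_def by auto

lemma split_interval_cover_radius:
  assumes "\<forall>U\<in>\<U>. openin (split_interval n) U"
    and "\<And>p. p \<in> split_interval_carrier n \<Longrightarrow> C p \<in> \<U> \<and> p \<in> C p"
    and "n \<ge> 2" "x \<in> {0..1}"
  shows "\<exists>d>0. split_nbhd n (x, 0) d \<subseteq> C (x, 0) \<and> split_nbhd n (x, 1) d \<subseteq> C (x, 1)"
proof -
  have "(x, 0) \<in> split_interval_carrier n" "(x, 1) \<in> split_interval_carrier n"
    using assms(3,4) by (auto simp: split_interval_carrier_def)
  then obtain e e' where "e > 0" "split_nbhd n (x, 0) e \<subseteq> C (x, 0)"
    and "e' > 0" "split_nbhd n (x, 1) e' \<subseteq> C (x, 1)"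
    using assms(1,2) openin_split_interval_contains_nbhd by meson
  then show ?thesis
    using split_nbhd_min_subset[of n _ e e'] by (intro exI[of _ "min e e'"]) fastforce
qed

lemma split_interval_carrier_finite_cover:
  assumes "n \<ge> 2" "{0..1::real} \<subseteq> (\<Union>x\<in>T. ball x (d x))"
    and "\<And>p. p \<in> split_interval_carrier n \<Longrightarrow> p \<in> C p"
    and "\<And>x. x \<in> T \<Longrightarrow>
      split_nbhd n (x, 0) (d x) \<subseteq> C (x, 0) \<and> split_nbhd n (x, 1) (d x) \<subseteq> C (x, 1)"
  shows "split_interval_carrier n \<subseteq> \<Union> (C ` (insert 0 (insert 1 T) \<times> {..<n}))"
proof
  fix p assume p: "p \<in> split_interval_carrier n"
  then obtain y j where yj: "p = (y, j)" "0 \<le> y" "y \<le> 1" "j < n"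
    by (auto simp: split_interval_carrier_def)
  then obtain x where x: "x \<in> T" "\<bar>y - x\<bar> < d x"
    using assms(2) by (force simp: dist_real_def)
  show "p \<in> \<Union> (C ` (insert 0 (insert 1 T) \<times> {..<n}))"
  proof (cases "y \<in> {0, 1, x}")
    case True
    then have "p \<in> insert 0 (insert 1 T) \<times> {..<n}"
      using x(1) yj by auto
    then show ?thesis
      using assms(3)[OF p] by blast
  next
    case False
    then have "p \<in> split_nbhd n (x, 0) (d x) \<union> split_nbhd n (x, 1) (d x)"
      using split_nbhd_interior_point[of y j n x "d x"] x yj by auto
    then have "p \<in> C (x, 0) \<union> C (x, 1)"
      using assms(4)[OF x(1)] by blast
    moreover have "(x, 0) \<in> insert 0 (insert 1 T) \<times> {..<n}" "(x, 1) \<in> insert 0 (insert 1 T) \<times> {..<n}"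
      using x(1) assms(1) by auto
    ultimately show ?thesis
      by blast
  qed
qed

lemma compact_space_split_interval:
  assumes "n \<ge> 2"
  shows "compact_space (split_interval n)"
  unfolding compact_space_alt topspace_split_interval[OF assms]
proof (intro allI impI)
  fix \<U> assume \<U>: "(\<forall>U\<in>\<U>. openin (split_interval n) U) \<and> split_interval_carrier n \<subseteq> \<Union>\<U>"
  then have "\<forall>p\<in>split_interval_carrier n. \<exists>U\<in>\<U>. p \<in> U"
    by blast
  then obtain C where C: "\<And>p. p \<in> split_interval_carrier n \<Longrightarrow> C p \<in> \<U> \<and> p \<in> C p"
    by metis
  have "\<forall>x\<in>{0..1}. \<exists>d>0.
      split_nbhd n (x, 0) d \<subseteq> C (x, 0) \<and> split_nbhd n (x, 1) d \<subseteq> C (x, 1)"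
    using split_interval_cover_radius[OF _ C assms] \<U> by blast
  then obtain d where d: "\<And>x. x \<in> {0..1} \<Longrightarrow>
      d x > 0 \<and> split_nbhd n (x, 0) (d x) \<subseteq> C (x, 0) \<and> split_nbhd n (x, 1) (d x) \<subseteq> C (x, 1)"
    by metis
  have "{0..1::real} \<subseteq> (\<Union>x\<in>{0..1}. ball x (d x))"
    using d by force
  then obtain T where T: "T \<subseteq> {0..1}" "finite T" "{0..1::real} \<subseteq> (\<Union>x\<in>T. ball x (d x))"
    using compactE_image[of "{0..1::real}" "{0..1}" "\<lambda>x. ball x (d x)"] by auto
  have "split_interval_carrier n \<subseteq> \<Union> (C ` (insert 0 (insert 1 T) \<times> {..<n}))"
    by (rule split_interval_carrier_finite_cover[OF assms T(3)]) (use C d T(1) in blast)+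
  moreover have "C ` (insert 0 (insert 1 T) \<times> {..<n}) \<subseteq> \<U>"
    using T(1) C by (auto simp: split_interval_carrier_def)
  moreover have "finite (C ` (insert 0 (insert 1 T) \<times> {..<n}))"
    using T(2) by simp
  ultimately show "\<exists>\<F>. finite \<F> \<and> \<F> \<subseteq> \<U> \<and> split_interval_carrier n \<subseteq> \<Union>\<F>"
    by blast
qed

theorem mainTheorem4:
  fixes n :: nat
  assumes "n \<ge> 2"
  shows "topspace (split_interval n) = split_interval_carrier n
         \<and> compact_space (split_interval n) \<and> Hausdorff_space (split_interval n)"
  using topspace_split_interval compact_space_split_interval Hausdorff_space_split_interval
    assms by blast

end
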